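(* Let $\eta_w>0$, $\lambda\in[0,1]$, and let $\theta_1,\dots,\theta_T\in\Theta$ satisfy $\theta_{t+1}=\arg\min_{\theta\in\Theta}\{\eta_w\langle\tilde g_t,\theta-\theta_t\rangle+\frac12\|\theta-\theta_t\|_2^2\}$ with $\tilde g_t=\nabla\ell(\theta_t,z_t)$ for some samples $z_t\in\mathcal Z$. If $S$ is a $0.4\lambda$-dominant set at $\theta_t$ for some $t\in[T]$, then for any non-negative integer $\sigma'\le\min\{\lfloor\frac{0.1\lambda}{\eta_wG^2}\rfloor,T-t\}$, $S$ is also a $0.2\lambda$-dominant set at $\theta_{t+\sigma'}$.
   Context: $\Theta\subset\mathbb{R}^n$ is compact and convex; $\ell:\Theta\times\mathcal Z\to[0,1]$ is convex and $G$-Lipschitz in its first argument (so its (sub)gradients in $\theta$ have $\ell_2$-norm at most $G$); $\mathcal P_1,\dots,\mathcal P_K$ are distributions on $\mathcal Z$ and $R_i(\theta)=\mathbb E_{z\sim\mathcal P_i}\ell(\theta,z)$. For $\mu\ge0$, a nonempty $S\subseteq[K]$ is $\mu$-dominant at $\theta$ if $\min_{i\in S}R_i(\theta)\ge R_j(\theta)+\mu$ for all $j\in[K]\setminus S$. *)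

theory Defs
  imports "HOL-Probability.Probability"
begin

definition risk :: "(nat \<Rightarrow> 'z measure) \<Rightarrow> ('a \<Rightarrow> 'z \<Rightarrow> real) \<Rightarrow> nat \<Rightarrow> 'a \<Rightarrow> real" where
  "risk P loss i \<theta> = integral\<^sup>L (P i) (\<lambda>z. loss \<theta> z)"

definition dominant :: "(nat \<Rightarrow> 'a \<Rightarrow> real) \<Rightarrow> nat \<Rightarrow> real \<Rightarrow> nat set \<Rightarrow> 'a \<Rightarrow> bool" where
  "dominant R K \<mu> S \<theta> \<longleftrightarrow> S \<noteq> {} \<and> S \<subseteq> {1..K} \<and>
     (\<forall>j\<in>{1..K} - S. Min ((\<lambda>i. R i \<theta>) ` S) \<ge> R j \<theta> + \<mu>)"

definition is_subgradient :: "'a::real_inner set \<Rightarrow> ('a \<Rightarrow> real) \<Rightarrow> 'a \<Rightarrow> 'a \<Rightarrow> bool" where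
  "is_subgradient D f x g \<longleftrightarrow> (\<forall>y\<in>D. f y \<ge> f x + g \<bullet> (y - x))"

end

theory Submission
  imports Defs
begin

text \<open>Completing the square, each step is the Euclidean projection of \<open>\<theta>\<^sub>t - \<eta>\<^sub>w g\<^sub>t\<close>
  onto \<open>\<Theta>\<close>. Testing the obtuse-angle property of the projection against \<open>\<theta>\<^sub>t \<in> \<Theta>\<close>
  gives \<open>\<parallel>\<theta>\<^sub>t\<^sub>+\<^sub>1 - \<theta>\<^sub>t\<parallel>\<^sup>2 \<le> \<eta>\<^sub>w \<langle>g\<^sub>t, \<theta>\<^sub>t - \<theta>\<^sub>t\<^sub>+\<^sub>1\<rangle>\<close>, so each step moves by at most
  \<open>\<eta>\<^sub>w G\<close> and \<open>\<sigma>'\<close> steps by at most \<open>\<sigma>' \<eta>\<^sub>w G \<le> 0.1 \<lambda> / G\<close>. Every risk \<open>R\<^sub>i\<close> is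
  \<open>G\<close>-Lipschitz, hence changes by at most \<open>0.1 \<lambda>\<close>, and a dominance gap shrinks by at most
  twice that.\<close>

lemma prox_step_objective_eq:
  fixes x g \<theta> :: "'a::real_inner"
  shows "e * (g \<bullet> (\<theta> - x)) + 1/2 * (norm (\<theta> - x))\<^sup>2
    = 1/2 * (dist (x - e *\<^sub>R g) \<theta>)\<^sup>2 - 1/2 * e\<^sup>2 * (norm g)\<^sup>2"
  unfolding dist_norm power2_norm_eq_inner
  by (simp add: inner_commute algebra_simps power2_eq_square)

lemma is_arg_min_prox_step_closest:
  fixes x g y :: "'a::real_inner"
  assumes "is_arg_min (\<lambda>\<theta>. e * (g \<bullet> (\<theta> - x)) + 1/2 * (norm (\<theta> - x))\<^sup>2) (\<lambda>\<theta>. \<theta> \<in> D) y"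
  shows "y \<in> D" "\<forall>z\<in>D. dist (x - e *\<^sub>R g) y \<le> dist (x - e *\<^sub>R g) z"
proof -
  show "y \<in> D" using assms by (simp add: is_arg_min_def)
  show "\<forall>z\<in>D. dist (x - e *\<^sub>R g) y \<le> dist (x - e *\<^sub>R g) z"
  proof
    fix z assume "z \<in> D"
    then have "e * (g \<bullet> (y - x)) + 1/2 * (norm (y - x))\<^sup>2 \<le> e * (g \<bullet> (z - x)) + 1/2 * (norm (z - x))\<^sup>2"
      using assms by (auto simp: is_arg_min_def not_less)
    then have "(dist (x - e *\<^sub>R g) y)\<^sup>2 \<le> (dist (x - e *\<^sub>R g) z)\<^sup>2"
      unfolding prox_step_objective_eq by simp
    then show "dist (x - e *\<^sub>R g) y \<le> dist (x - e *\<^sub>R g) z"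
      by (simp add: power2_le_iff_abs_le)
  qed
qed

lemma prox_step_norm_le:
  fixes x g y :: "'a::real_inner"
  assumes "convex D" "closed D" "x \<in> D"
    and "is_arg_min (\<lambda>\<theta>. e * (g \<bullet> (\<theta> - x)) + 1/2 * (norm (\<theta> - x))\<^sup>2) (\<lambda>\<theta>. \<theta> \<in> D) y"
  shows "norm (y - x) \<le> \<bar>e\<bar> * norm g"
proof -
  note closest = is_arg_min_prox_step_closest[OF assms(4)]
  have "(x - e *\<^sub>R g - y) \<bullet> (x - y) \<le> 0"
    using any_closest_point_dot[OF assms(1,2) closest(1) assms(3) closest(2)] .
  then have "(norm (y - x))\<^sup>2 \<le> e * (g \<bullet> (x - y))"
    by (simp add: power2_norm_eq_inner inner_diff_left inner_diff_right inner_commute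
        algebra_simps)
  also have "\<dots> \<le> \<bar>e\<bar> * \<bar>g \<bullet> (x - y)\<bar>"
    by (metis abs_ge_self abs_mult)
  also have "\<dots> \<le> \<bar>e\<bar> * norm g * norm (y - x)"
    using Cauchy_Schwarz_ineq2[of g "x - y"]
    by (simp add: mult.assoc mult_left_mono norm_minus_commute)
  finally show ?thesis
    by (cases "norm (y - x) = 0") (simp_all add: power2_eq_square)
qed

lemma norm_diff_le_steps:
  fixes f :: "nat \<Rightarrow> 'a::real_normed_vector"
  assumes "\<And>s. t \<le> s \<Longrightarrow> s < t + k \<Longrightarrow> norm (f (Suc s) - f s) \<le> c"
  shows "norm (f (t + k) - f t) \<le> real k * c"
  using assms
proof (induction k)
  case 0
  then show ?case by simp
next
  case (Suc k)
  have "norm (f (t + Suc k) - f t) \<le> norm (f (Suc (t + k)) - f (t + k)) + norm (f (t + k) - f t)"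
    using norm_triangle_ineq[of "f (Suc (t + k)) - f (t + k)" "f (t + k) - f t"] by simp
  also have "\<dots> \<le> c + real k * c"
    using Suc by (intro add_mono) auto
  finally show ?case by (simp add: algebra_simps)
qed

lemma prox_iterates_drift_le:
  fixes \<theta>s g :: "nat \<Rightarrow> 'a::real_inner"
  assumes "convex D" "closed D" "0 \<le> \<eta>"
    and "\<And>s. t \<le> s \<Longrightarrow> s < t + k \<Longrightarrow> \<theta>s s \<in> D"
    and "\<And>s. t \<le> s \<Longrightarrow> s < t + k \<Longrightarrow> norm (g s) \<le> G"
    and "\<And>s. t \<le> s \<Longrightarrow> s < t + k \<Longrightarrow> is_arg_min
      (\<lambda>\<theta>. \<eta> * (g s \<bullet> (\<theta> - \<theta>s s)) + 1/2 * (norm (\<theta> - \<theta>s s))\<^sup>2) (\<lambda>\<theta>. \<theta> \<in> D) (\<theta>s (Suc s))"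
  shows "norm (\<theta>s (t + k) - \<theta>s t) \<le> real k * (\<eta> * G)"
proof (rule norm_diff_le_steps)
  fix s assume s: "t \<le> s" "s < t + k"
  have "norm (\<theta>s (Suc s) - \<theta>s s) \<le> \<bar>\<eta>\<bar> * norm (g s)"
    using s assms by (intro prox_step_norm_le) auto
  also have "\<dots> \<le> \<eta> * G"
    using s assms by (auto intro!: mult_left_mono)
  finally show "norm (\<theta>s (Suc s) - \<theta>s s) \<le> \<eta> * G" .
qed

lemma (in prob_space) lipschitz_on_expectation:
  fixes f :: "'b::metric_space \<Rightarrow> 'a \<Rightarrow> real"
  assumes "\<And>\<theta>. \<theta> \<in> U \<Longrightarrow> integrable M (f \<theta>)"
    and "\<And>z. C-lipschitz_on U (\<lambda>\<theta>. f \<theta> z)"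
  shows "C-lipschitz_on U (\<lambda>\<theta>. expectation (f \<theta>))"
proof (rule lipschitz_onI)
  show "0 \<le> C" using assms(2) lipschitz_on_nonneg by blast
  fix \<theta> \<theta>' assume \<theta>: "\<theta> \<in> U" "\<theta>' \<in> U"
  have "dist (expectation (f \<theta>)) (expectation (f \<theta>')) = \<bar>expectation (\<lambda>z. f \<theta> z - f \<theta>' z)\<bar>"
    using \<theta> assms(1) by (simp add: dist_real_def)
  also have "\<dots> \<le> expectation (\<lambda>z. \<bar>f \<theta> z - f \<theta>' z\<bar>)"
    using integral_norm_bound[of M "\<lambda>z. f \<theta> z - f \<theta>' z"] by simp
  also have "\<dots> \<le> expectation (\<lambda>z. C * dist \<theta> \<theta>')"
    using \<theta> assms lipschitz_onD[OF assms(2)]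
    by (intro integral_mono) (auto simp: dist_real_def)
  also have "\<dots> = C * dist \<theta> \<theta>'"
    by (simp add: prob_space)
  finally show "dist (expectation (f \<theta>)) (expectation (f \<theta>')) \<le> C * dist \<theta> \<theta>'" .
qed

lemma risk_lipschitz_on:
  assumes "prob_space (P i)"
    and "\<forall>\<theta>\<in>D. loss \<theta> \<in> borel_measurable (P i)"
    and "\<forall>\<theta>\<in>D. \<forall>z. \<bar>loss \<theta> z\<bar> \<le> B"
    and "\<forall>z. C-lipschitz_on D (\<lambda>\<theta>. loss \<theta> z)"
  shows "C-lipschitz_on D (risk P loss i)"
proof -
  interpret prob_space "P i" by fact
  show ?thesis
    unfolding risk_def using assms(2-4)
    by (intro lipschitz_on_expectation integrable_const_bound[where B = B]) auto
qed

lemma dominant_perturb: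
  assumes "dominant R K \<mu> S \<theta>"
    and "\<And>i. i \<in> {1..K} \<Longrightarrow> \<bar>R i \<theta>' - R i \<theta>\<bar> \<le> \<delta>"
    and "\<mu>' + 2 * \<delta> \<le> \<mu>"
  shows "dominant R K \<mu>' S \<theta>'"
  unfolding dominant_def
proof (intro conjI ballI)
  show S: "S \<noteq> {}" "S \<subseteq> {1..K}"
    using assms(1) by (simp_all add: dominant_def)
  then have "finite S" by (simp add: finite_subset)
  fix j assume j: "j \<in> {1..K} - S"
  have gap: "Min ((\<lambda>i. R i \<theta>) ` S) \<ge> R j \<theta> + \<mu>"
    using assms(1) j by (simp add: dominant_def)
  have "R j \<theta>' + \<mu>' \<le> R i \<theta>'" if "i \<in> S" for i
  proof -
    have "Min ((\<lambda>i. R i \<theta>) ` S) \<le> R i \<theta>"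
      using \<open>finite S\<close> that by simp
    moreover have "\<bar>R i \<theta>' - R i \<theta>\<bar> \<le> \<delta>" "\<bar>R j \<theta>' - R j \<theta>\<bar> \<le> \<delta>"
      using assms(2) S that j by auto
    ultimately show ?thesis
      using gap assms(3) by linarith
  qed
  then show "Min ((\<lambda>i. R i \<theta>') ` S) \<ge> R j \<theta>' + \<mu>'"
    using \<open>finite S\<close> S by simp
qed

theorem lemmaC3:
  fixes \<Theta> :: "'a::euclidean_space set"
    and loss :: "'a \<Rightarrow> 'z \<Rightarrow> real"
    and grad :: "'a \<Rightarrow> 'z \<Rightarrow> 'a"
    and G :: real
    and K :: nat
    and P :: "nat \<Rightarrow> 'z measure"
    and \<eta>w lam :: real
    and T t \<sigma>' :: nat
    and \<theta>s :: "nat \<Rightarrow> 'a"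
    and zs :: "nat \<Rightarrow> 'z"
    and S :: "nat set"
  assumes Theta_compact: "compact \<Theta>" and Theta_convex: "convex \<Theta>"
    and loss_range: "\<forall>\<theta>\<in>\<Theta>. \<forall>z. 0 \<le> loss \<theta> z \<and> loss \<theta> z \<le> 1"
    and loss_convex: "\<forall>z. convex_on \<Theta> (\<lambda>\<theta>. loss \<theta> z)"
    and G_pos: "G > 0"
    and loss_lipschitz: "\<forall>z. G-lipschitz_on \<Theta> (\<lambda>\<theta>. loss \<theta> z)"
    and grad_subgrad: "\<forall>\<theta>\<in>\<Theta>. \<forall>z. is_subgradient \<Theta> (\<lambda>\<theta>'. loss \<theta>' z) \<theta> (grad \<theta> z)"
    and grad_bound: "\<forall>\<theta>\<in>\<Theta>. \<forall>z. norm (grad \<theta> z) \<le> G"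
    and P_prob: "\<forall>i\<in>{1..K}. prob_space (P i)"
    and loss_meas: "\<forall>i\<in>{1..K}. \<forall>\<theta>\<in>\<Theta>. (\<lambda>z. loss \<theta> z) \<in> borel_measurable (P i)"
    and eta_pos: "\<eta>w > 0"
    and lambda_range: "0 \<le> lam" "lam \<le> 1"
    and iter_in: "\<forall>s\<in>{1..T}. \<theta>s s \<in> \<Theta>"
    and iter_step: "\<forall>s\<in>{1..<T}. is_arg_min
        (\<lambda>\<theta>. \<eta>w * (grad (\<theta>s s) (zs s) \<bullet> (\<theta> - \<theta>s s)) + 1/2 * (norm (\<theta> - \<theta>s s))\<^sup>2)
        (\<lambda>\<theta>. \<theta> \<in> \<Theta>) (\<theta>s (Suc s))"
    and t_range: "1 \<le> t" "t \<le> T"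
    and S_dom: "dominant (risk P loss) K (0.4 * lam) S (\<theta>s t)"
    and sigma_le1: "int \<sigma>' \<le> \<lfloor>0.1 * lam / (\<eta>w * G\<^sup>2)\<rfloor>"
    and sigma_le2: "\<sigma>' \<le> T - t"
  shows "dominant (risk P loss) K (0.2 * lam) S (\<theta>s (t + \<sigma>'))"
proof -
  have iter_mem: "\<theta>s s \<in> \<Theta>" if "t \<le> s" "s \<le> t + \<sigma>'" for s
    using that t_range sigma_le2 iter_in by auto
  have "G * dist (\<theta>s (t + \<sigma>')) (\<theta>s t) \<le> G * (real \<sigma>' * (\<eta>w * G))"
    unfolding dist_norm
    using G_pos Theta_convex compact_imp_closed[OF Theta_compact] eta_pos iter_mem grad_bound
      iter_step t_range sigma_le2
    by (intro mult_left_mono prox_iterates_drift_le[where g = "\<lambda>s. grad (\<theta>s s) (zs s)"]) auto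
  also have "\<dots> \<le> 0.1 * lam"
    using sigma_le1 eta_pos G_pos by (simp add: le_floor_iff field_simps power2_eq_square)
  finally have drift: "G * dist (\<theta>s (t + \<sigma>')) (\<theta>s t) \<le> 0.1 * lam" .
  have "\<bar>risk P loss i (\<theta>s (t + \<sigma>')) - risk P loss i (\<theta>s t)\<bar> \<le> 0.1 * lam"
    if "i \<in> {1..K}" for i
  proof -
    have "G-lipschitz_on \<Theta> (risk P loss i)"
      using that P_prob loss_meas loss_range loss_lipschitz
      by (intro risk_lipschitz_on[where B = 1]) auto
    then have "dist (risk P loss i (\<theta>s (t + \<sigma>'))) (risk P loss i (\<theta>s t))
        \<le> G * dist (\<theta>s (t + \<sigma>')) (\<theta>s t)"
      using iter_mem by (intro lipschitz_onD) auto
    then show ?thesis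
      using drift by (simp add: dist_real_def)
  qed
  moreover have "0.2 * lam + 2 * (0.1 * lam) \<le> 0.4 * lam"
    by simp
  ultimately show ?thesis
    by (rule dominant_perturb[OF S_dom])
qed

end
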